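(* Let $m,q\in\mathbb{Q}\setminus\{0\}$ with $q\neq -1/m$. Then the torsion subgroup of $E_{m,q}(\mathbb{Q})$ contains a subgroup isomorphic to $\mathbb{Z}/2\mathbb{Z}$; explicitly $\bigl(\tfrac13((m^2+1)q^2+2mq+2),0\bigr)\in E_{m,q}(\mathbb{Q})$. Moreover, for every fixed $m\in\mathbb{Q}\setminus\{0\}$ there exist infinitely many $q\in\mathbb{Q}$ (with $q\neq0$, $q\neq-1/m$) such that the torsion subgroup of $E_{m,q}(\mathbb{Q})$ contains a subgroup isomorphic to $\mathbb{Z}/2\mathbb{Z}\times\mathbb{Z}/2\mathbb{Z}$.
   Context: For $m,q$ (rational numbers or indeterminates), $E_{m,q}$ denotes the curve given by the Weierstrass equation $$y^2=x^3-\tfrac13\bigl[(m^2+1)^2q^4+4m(m^2+1)q^3+(5m^2+4)q^2+2mq+1\bigr]x+\tfrac1{27}\bigl[2(m^2+1)^2q^4+8m(m^2+1)q^3+(7m^2+8)q^2-2mq-1\bigr]\bigl[(m^2+1)q^2+2mq+2\bigr].$$ For $m,q\in\mathbb{Q}^\times$ with $q\ne-1/m$ it is an elliptic curve. *)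

theory Defs
  imports Complex_Main
begin

text \<open>Points of a short Weierstrass curve y^2 = x^3 + a x + b over Q:
  None is the point at infinity O, Some (x,y) an affine point.\<close>

type_synonym ec_point = "(rat \<times> rat) option"

definition on_curve :: "rat \<Rightarrow> rat \<Rightarrow> ec_point \<Rightarrow> bool" where
  "on_curve a b P = (case P of None \<Rightarrow> True
     | Some (x, y) \<Rightarrow> y^2 = x^3 + a * x + b)"

text \<open>The chord-and-tangent group law (depends only on the coefficient a).\<close>
definition ec_add :: "rat \<Rightarrow> ec_point \<Rightarrow> ec_point \<Rightarrow> ec_point" where
  "ec_add a P Q = (case P of None \<Rightarrow> Q | Some (x1, y1) \<Rightarrow>
     (case Q of None \<Rightarrow> P | Some (x2, y2) \<Rightarrow>
       (if x1 = x2 \<and> y1 = - y2 then None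
        else let l = (if x1 = x2 then (3 * x1^2 + a) / (2 * y1)
                      else (y2 - y1) / (x2 - x1));
                 x3 = l^2 - x1 - x2
             in Some (x3, l * (x1 - x3) - y1))))"

definition coeffA :: "rat \<Rightarrow> rat \<Rightarrow> rat" where
  "coeffA m q = - (1/3) * ((m^2+1)^2*q^4 + 4*m*(m^2+1)*q^3 + (5*m^2+4)*q^2 + 2*m*q + 1)"

definition coeffB :: "rat \<Rightarrow> rat \<Rightarrow> rat" where
  "coeffB m q = (1/27) * (2*(m^2+1)^2*q^4 + 8*m*(m^2+1)*q^3 + (7*m^2+8)*q^2 - 2*m*q - 1)
                       * ((m^2+1)*q^2 + 2*m*q + 2)"

definition Emq_point :: "rat \<Rightarrow> rat \<Rightarrow> ec_point \<Rightarrow> bool" where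
  "Emq_point m q P = on_curve (coeffA m q) (coeffB m q) P"

definition Emq_add :: "rat \<Rightarrow> rat \<Rightarrow> ec_point \<Rightarrow> ec_point \<Rightarrow> ec_point" where
  "Emq_add m q = ec_add (coeffA m q)"

definition order2 :: "rat \<Rightarrow> rat \<Rightarrow> ec_point \<Rightarrow> bool" where
  "order2 m q P = (Emq_point m q P \<and> P \<noteq> None \<and> Emq_add m q P P = None)"

end

theory Submission
  imports Defs
begin

text \<open>Points of order 2 are the points (x, 0) with x a root of the cubic x^3 + A x + B.
  Writing s = (m^2+1) q^2 + 2 m q, the cubic of E_{m,q} has the rational root x0 = (s + 2)/3,
  and its two other roots (-x0 \<plusminus> W)/2 are rational exactly when
  -3 x0^2 - 4 A = s^2 + 4 q^2 = q^2 (t^2 + 4), with t = (m^2+1) q + 2 m, is a square W^2.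
  Choosing t = k - 1/k makes t^2 + 4 = (k + 1/k)^2, and the values
  q = (k - 1/k - 2 m)/(m^2+1), k > 0, are pairwise distinct.\<close>

lemma ec_add_self_vertical: "ec_add a (Some (x, 0)) (Some (x, 0)) = None"
  by (simp add: ec_add_def)

lemma order2_Some_zero_iff:
  "order2 m q (Some (x, 0)) \<longleftrightarrow> x^3 + coeffA m q * x + coeffB m q = 0"
  unfolding order2_def Emq_point_def Emq_add_def on_curve_def
  by (auto simp: ec_add_self_vertical)

lemma depressed_cubic_other_root:
  fixes x0 a b W :: "'a :: field_char_0"
  assumes root: "x0^3 + a * x0 + b = 0"
    and W: "W^2 = - 3 * x0^2 - 4 * a"
  shows "((W - x0) / 2)^3 + a * ((W - x0) / 2) + b = 0"
proof -
  have factor: "x^3 + a * x + b = (x - x0) * (x^2 + x0 * x + x0^2 + a)" for x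
    using root by (simp add: algebra_simps power2_eq_square power3_eq_cube eq_neg_iff_add_eq_0)
  have "((W - x0) / 2)^2 + x0 * ((W - x0) / 2) + x0^2 + a = (W^2 + 3 * x0^2 + 4 * a) / 4"
    by (simp add: field_simps power2_eq_square)
  also have "\<dots> = 0"
    using W by simp
  finally show ?thesis
    unfolding factor by simp
qed

lemma Emq_cubic_root:
  fixes m q :: rat
  defines "x0 \<equiv> (1/3) * ((m^2+1)*q^2 + 2*m*q + 2)"
  shows "x0^3 + coeffA m q * x0 + coeffB m q = 0"
  unfolding x0_def coeffA_def coeffB_def
  by (simp add: field_simps power2_eq_square power3_eq_cube power4_eq_xxxx)

lemma Emq_cubic_discriminant:
  fixes m q :: rat
  defines "x0 \<equiv> (1/3) * ((m^2+1)*q^2 + 2*m*q + 2)"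
  shows "- 3 * x0^2 - 4 * coeffA m q = ((m^2+1)*q^2 + 2*m*q)^2 + 4*q^2"
  unfolding x0_def coeffA_def
  by (simp add: field_simps power2_eq_square power3_eq_cube power4_eq_xxxx)

lemma Emq_two_order2_points:
  fixes m q W :: rat
  assumes W: "W^2 = ((m^2+1)*q^2 + 2*m*q)^2 + 4*q^2" and "W \<noteq> 0"
  shows "\<exists>P Q. order2 m q P \<and> order2 m q Q \<and> P \<noteq> Q"
proof -
  define x0 where "x0 = (1/3) * ((m^2+1)*q^2 + 2*m*q + 2)"
  have "order2 m q (Some ((w - x0) / 2, 0))" if "w^2 = W^2" for w
    unfolding order2_Some_zero_iff
  proof (rule depressed_cubic_other_root)
    show "x0^3 + coeffA m q * x0 + coeffB m q = 0"
      unfolding x0_def by (rule Emq_cubic_root)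
    show "w^2 = - 3 * x0^2 - 4 * coeffA m q"
      unfolding x0_def Emq_cubic_discriminant using that W by simp
  qed
  moreover have "Some ((W - x0) / 2, 0) \<noteq> Some ((- W - x0) / 2, 0::rat)"
    using \<open>W \<noteq> 0\<close> by simp
  ultimately show ?thesis
    by (metis power2_minus)
qed

lemma Emq_two_order2_points_param:
  fixes m k :: rat
  defines "q \<equiv> (k - 1/k - 2*m) / (m^2+1)"
  assumes "k > 0" and "q \<noteq> 0"
  shows "\<exists>P Q. order2 m q P \<and> order2 m q Q \<and> P \<noteq> Q"
proof (rule Emq_two_order2_points)
  have "m^2 + 1 > (0::rat)"
    by (simp add: add_nonneg_pos)
  then have t: "(m^2+1)*q + 2*m = k - 1/k"
    unfolding q_def by simp
  have "((m^2+1)*q^2 + 2*m*q)^2 + 4*q^2 = q^2 * (((m^2+1)*q + 2*m)^2 + 4)"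
    by (simp add: algebra_simps power2_eq_square)
  also have "\<dots> = (q * (k + 1/k))^2"
    using \<open>k > 0\<close> unfolding t by (simp add: field_simps power2_eq_square)
  finally show "(q * (k + 1/k))^2 = ((m^2+1)*q^2 + 2*m*q)^2 + 4*q^2" ..
  have "k + 1/k > 0"
    using \<open>k > 0\<close> by (simp add: add_pos_pos)
  then show "q * (k + 1/k) \<noteq> 0"
    using \<open>q \<noteq> 0\<close> by simp
qed

lemma Emq_param_strict_mono:
  fixes m :: rat
  shows "strict_mono_on {0<..} (\<lambda>k. (k - 1/k - 2*m) / (m^2+1))"
proof (rule strict_mono_onI)
  fix a b :: rat
  assume "a \<in> {0<..}" "a < b"
  then have "a - 1/a < b - 1/b"
    by (simp add: frac_less2 diff_strict_mono)
  moreover have "m^2 + 1 > (0::rat)"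
    by (simp add: add_nonneg_pos)
  ultimately show "(a - 1/a - 2*m) / (m^2+1) < (b - 1/b - 2*m) / (m^2+1)"
    by (simp add: divide_strict_right_mono)
qed

lemma Emq_infinitely_many_two_order2_points:
  fixes m :: rat
  shows "infinite {q. q \<noteq> 0 \<and> q \<noteq> -1/m \<and> (\<exists>P Q. order2 m q P \<and> order2 m q Q \<and> P \<noteq> Q)}"
proof -
  define g where "g k = (k - 1/k - 2*m) / (m^2+1)" for k :: rat
  have "infinite (g ` {0<..})"
    using Emq_param_strict_mono[of m] infinite_Ioi finite_imageD strict_mono_on_imp_inj_on
    unfolding g_def by blast
  then have "infinite (g ` {0<..} - {0, -1/m})"
    by simp
  moreover have "g ` {0<..} - {0, -1/m} \<subseteq>
      {q. q \<noteq> 0 \<and> q \<noteq> -1/m \<and> (\<exists>P Q. order2 m q P \<and> order2 m q Q \<and> P \<noteq> Q)}"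
    using Emq_two_order2_points_param unfolding g_def by auto
  ultimately show ?thesis
    using finite_subset by blast
qed

theorem mainTheorem5:
  shows "(\<forall>m q :: rat. m \<noteq> 0 \<longrightarrow> q \<noteq> 0 \<longrightarrow> q \<noteq> -1/m \<longrightarrow>
            order2 m q (Some ((1/3) * ((m^2+1)*q^2 + 2*m*q + 2), 0)))
       \<and> (\<forall>m :: rat. m \<noteq> 0 \<longrightarrow>
            infinite {q :: rat. q \<noteq> 0 \<and> q \<noteq> -1/m \<and>
              (\<exists>P Q. order2 m q P \<and> order2 m q Q \<and> P \<noteq> Q)})"
  using Emq_cubic_root Emq_infinitely_many_two_order2_points
  by (simp add: order2_Some_zero_iff)

end
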